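(* For every $n\ge1$, every greedy-from-the-bottom (GFB) tree $T$ with $n$ leaves satisfies $\mathcal{C}(T)=c_n$.
   Context: Bifurcating trees: rooted trees in which every internal node has exactly two children, considered up to isomorphism; $\mathcal{T}_n$ is the set of such trees with $n$ leaves. For a node $w$, $\kappa_T(w)$ is its number of descendant leaves. The Colless index is $\mathcal{C}(T)=\sum_{v}|\kappa_T(v_1)-\kappa_T(v_2)|$, summed over internal nodes $v$ with children $v_1,v_2$; $c_n=\min\{\mathcal{C}(T):T\in\mathcal{T}_n\}$. GFB trees: start with a multiset of $n$ single-node trees; while the multiset has more than one tree, remove a tree $u$ with the minimum number of leaves, then remove a tree $v$ with the minimum number of leaves among the remaining trees, and insert the tree consisting of a new root whose two children are the roots of $u$ and $v$. Any tree that can be the final remaining tree of this procedure is a GFB tree with $n$ leaves. *)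

theory Defs
  imports Main "HOL-Library.Multiset"
begin

text \<open>Rooted bifurcating trees (ordered representatives; Colless index and leaf
counts are invariant under swapping children, so isomorphism classes need not be
formed explicitly).\<close>
datatype btree = Leaf | Node btree btree

fun leaves :: "btree \<Rightarrow> nat" where
  "leaves Leaf = 1"
| "leaves (Node l r) = leaves l + leaves r"

fun colless :: "btree \<Rightarrow> nat" where
  "colless Leaf = 0"
| "colless (Node l r) = colless l + colless r + nat \<bar>int (leaves l) - int (leaves r)\<bar>"

definition min_colless :: "nat \<Rightarrow> nat" where
  "min_colless n = Min {colless t | t. leaves t = n}"

inductive gfb_step :: "btree multiset \<Rightarrow> btree multiset \<Rightarrow> bool" where
  "\<lbrakk> u \<in># M; \<forall>w\<in>#M. leaves u \<le> leaves w;
     v \<in># M - {#u#}; \<forall>w\<in>#M - {#u#}. leaves v \<le> leaves w \<rbrakk>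
   \<Longrightarrow> gfb_step M (add_mset (Node u v) (M - {#u#} - {#v#}))"

definition is_GFB :: "nat \<Rightarrow> btree \<Rightarrow> bool" where
  "is_GFB n T \<longleftrightarrow> gfb_step\<^sup>*\<^sup>* (replicate_mset n Leaf) {#T#}"

end

theory Submission
  imports Defs
begin

text \<open>
  Let b(n) be the Colless index of the maximally balanced tree, given by
  b(n) = b(\<lfloor>n/2\<rfloor>) + b(\<lceil>n/2\<rceil>) + (n mod 2). The defect
  b(a) + b(b) + |a - b| - b(a + b) obeys recurrences in the halves of a and b, from which
  strong induction shows that it is nonnegative; hence b(leaves t) \<le> colless t for every
  tree t, and b(n) is the minimal Colless index as soon as some tree attains it. The same
  recurrences show that the defect vanishes when a \<le> b \<le> 2a and one of a, b is a power
  of two. Every GFB merge is such an equality case, because the forest keeps the invariant: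
  each tree t has Colless index b(leaves t), any two sizes differ by a factor at most 2, and
  at most one size is not a power of two.
\<close>



fun balanced_colless :: "nat \<Rightarrow> nat" where
  "balanced_colless n =
     (if n \<le> 1 then 0
      else balanced_colless (n div 2) + balanced_colless ((n + 1) div 2) + n mod 2)"

declare balanced_colless.simps [simp del]

lemma balanced_colless_0 [simp]: "balanced_colless 0 = 0"
  and balanced_colless_1 [simp]: "balanced_colless (Suc 0) = 0"
  by (simp_all add: balanced_colless.simps)

lemma balanced_colless_double: "balanced_colless (2 * k) = 2 * balanced_colless k"
  by (cases "k = 0") (simp, subst balanced_colless.simps, simp)

lemma balanced_colless_Suc_double:
  "k \<ge> 1 \<Longrightarrow>
     balanced_colless (2 * k + 1) = balanced_colless k + balanced_colless (k + 1) + 1"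
  by (subst balanced_colless.simps) simp

lemma balanced_colless_power_of_2: "balanced_colless (2 ^ i) = 0"
  by (induction i) (simp_all add: balanced_colless_double)

lemma balanced_colless_Suc_le:
  "a \<ge> 1 \<Longrightarrow> balanced_colless (a + 1) + 1 \<le> balanced_colless a + a"
proof (induction a rule: less_induct)
  case (less a)
  show ?case
  proof (cases "a = 1")
    case True
    then show ?thesis using balanced_colless_power_of_2[of 1] by (simp add: numeral_2_eq_2)
  next
    case False
    obtain x where "a = 2 * x \<or> a = 2 * x + 1" by (metis evenE oddE)
    moreover from this have "x \<ge> 1" "x < a" using less.prems False by auto
    ultimately show ?thesis
      using less.IH[of x] balanced_colless_double[of x] balanced_colless_double[of "x + 1"]
        balanced_colless_Suc_double[of x] by auto
  qed
qed

definition colless_defect :: "nat \<Rightarrow> nat \<Rightarrow> int" where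
  "colless_defect a b = int (balanced_colless a) + int (balanced_colless b)
     + \<bar>int a - int b\<bar> - int (balanced_colless (a + b))"

lemma colless_defect_commute: "colless_defect a b = colless_defect b a"
  by (simp add: colless_defect_def add.commute abs_minus_commute)

lemma colless_defect_double: "colless_defect (2 * x) (2 * y) = 2 * colless_defect x y"
proof -
  have "\<bar>int (2 * x) - int (2 * y)\<bar> = 2 * \<bar>int x - int y\<bar>"
    by (auto simp: abs_if)
  then show ?thesis
    using balanced_colless_double[of x] balanced_colless_double[of y]
      balanced_colless_double[of "x + y"]
    by (simp add: colless_defect_def algebra_simps)
qed

lemma colless_defect_double_Suc_double:
  assumes "y \<ge> 1"
  shows "colless_defect (2 * x) (2 * y + 1) = colless_defect x y + colless_defect x (y + 1)"
proof -
  have "\<bar>int (2 * x) - int (2 * y + 1)\<bar> = \<bar>int x - int y\<bar> + \<bar>int x - int (y + 1)\<bar>"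
    by auto
  moreover have "2 * x + (2 * y + 1) = 2 * (x + y) + 1" "x + (y + 1) = x + y + 1"
    by simp_all
  ultimately show ?thesis
    using assms balanced_colless_Suc_double[of y] balanced_colless_Suc_double[of "x + y"]
    by (simp add: colless_defect_def balanced_colless_double)
qed

lemma colless_defect_Suc_double_Suc_double:
  assumes "x \<ge> 1" "y \<ge> 1"
  shows "colless_defect x (y + 1) + colless_defect (x + 1) y
           \<le> colless_defect (2 * x + 1) (2 * y + 1)"
proof -
  have "\<bar>int x - int (y + 1)\<bar> + \<bar>int (x + 1) - int y\<bar>
          \<le> 2 + \<bar>int (2 * x + 1) - int (2 * y + 1)\<bar>"
    by auto
  moreover have "2 * x + 1 + (2 * y + 1) = 2 * (x + y + 1)" "x + (y + 1) = x + y + 1"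
    "x + 1 + y = x + y + 1"
    by simp_all
  ultimately show ?thesis
    using assms balanced_colless_Suc_double[of x] balanced_colless_Suc_double[of y]
      balanced_colless_double[of "x + y + 1"]
    by (simp add: colless_defect_def)
qed

lemma colless_defect_nonneg: "colless_defect a b \<ge> 0"
proof (induction "a + b" arbitrary: a b rule: less_induct)
  case less
  have small: "colless_defect c d \<ge> 0" if "d \<le> 1" for c d
    using that balanced_colless_Suc_le[of c]
    by (cases "c = 0") (auto simp: le_Suc_eq colless_defect_def)
  have large: "colless_defect c d \<ge> 0"
    if cd: "c \<ge> 2" "d \<ge> 2" "c + d = a + b" "even c \<or> odd d" for c d
  proof -
    obtain x where x: "c = 2 * x \<or> c = 2 * x + 1" by (metis evenE oddE)
    obtain y where y: "d = 2 * y \<or> d = 2 * y + 1" by (metis evenE oddE)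
    have xy: "x \<ge> 1" "y \<ge> 1"
      using x y cd by auto
    consider "c = 2 * x" "d = 2 * y" | "c = 2 * x" "d = 2 * y + 1"
      | "c = 2 * x + 1" "d = 2 * y + 1"
      using x y cd(4) by auto
    then show ?thesis
      using cd xy less[of x y] less[of x "y + 1"] less[of "x + 1" y]
        colless_defect_double[of x y] colless_defect_double_Suc_double[of y x]
        colless_defect_Suc_double_Suc_double[of x y]
      by cases simp_all
  qed
  show ?case
    using small[of a b] small[of b a] large[of a b] large[of b a] colless_defect_commute[of a b]
    by (cases "a \<le> 1 \<or> b \<le> 1") force+
qed

lemma colless_defect_power_of_2:
  "2 ^ i \<le> 2 * x \<Longrightarrow> x \<le> 2 ^ (i + 1) \<Longrightarrow> colless_defect (2 ^ i) x = 0"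
proof (induction i arbitrary: x)
  case 0
  then have "x = 1 \<or> x = 2" by auto
  then show ?case
    using balanced_colless_Suc_double[of 1] balanced_colless_power_of_2[of 1]
    by (auto simp: colless_defect_def numeral_2_eq_2)
next
  case (Suc i)
  obtain y where "x = 2 * y \<or> x = 2 * y + 1" by (metis evenE oddE)
  then show ?case
  proof
    assume x: "x = 2 * y"
    then have "colless_defect (2 ^ i) y = 0"
      using Suc by (intro Suc.IH) auto
    then show ?thesis
      using x colless_defect_double[of "2 ^ i" y] by simp
  next
    assume x: "x = 2 * y + 1"
    show ?thesis
    proof (cases "y = 0")
      case True
      then have "i = 0"
        using x Suc.prems power_le_one_iff[of "2::nat" i] by simp
      then show ?thesis
        using x True balanced_colless_Suc_double[of 1] balanced_colless_power_of_2[of 1]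
        by (simp add: colless_defect_def numeral_2_eq_2 numeral_3_eq_3)
    next
      case False
      have "2 ^ i \<le> 2 * y" "y + 1 \<le> 2 ^ (i + 1)"
        using x Suc.prems False by (cases i; simp; presburger)+
      then have "colless_defect (2 ^ i) y = 0" "colless_defect (2 ^ i) (y + 1) = 0"
        using Suc.IH[of y] Suc.IH[of "y + 1"] by auto
      then show ?thesis
        using x False colless_defect_double_Suc_double[of y "2 ^ i"] by simp
    qed
  qed
qed

lemma balanced_colless_le_colless: "balanced_colless (leaves t) \<le> colless t"
proof (induction t)
  case (Node l r)
  have "colless_defect (leaves l) (leaves r) \<ge> 0"
    by (rule colless_defect_nonneg)
  with Node show ?case
    by (simp add: colless_defect_def)
qed simp

lemma leaves_ge_1: "leaves t \<ge> 1"
  by (induction t) auto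

lemma colless_le_square: "colless t \<le> leaves t * leaves t"
proof (induction t)
  case (Node l r)
  have "leaves l \<le> leaves l * leaves r" "leaves r \<le> leaves l * leaves r"
    using leaves_ge_1[of l] leaves_ge_1[of r] by simp_all
  then have "nat \<bar>int (leaves l) - int (leaves r)\<bar> \<le> 2 * (leaves l * leaves r)"
    by linarith
  with Node show ?case by (simp add: algebra_simps)
qed simp

lemma min_colless_eqI:
  assumes "leaves T = n" "colless T = balanced_colless n"
  shows "min_colless n = colless T"
  unfolding min_colless_def
proof (rule Min_eqI)
  show "finite {colless t |t. leaves t = n}"
    by (rule finite_subset[of _ "{..n * n}"]) (use colless_le_square in fastforce)+
  show "colless T \<le> c" if "c \<in> {colless t |t. leaves t = n}" for c
  proof -
    from that obtain t where "c = colless t" "leaves t = n" by blast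
    then show ?thesis using assms balanced_colless_le_colless[of t] by simp
  qed
qed (use assms in blast)

definition power_of_two :: "nat \<Rightarrow> bool" where
  "power_of_two m \<longleftrightarrow> (\<exists>i. m = 2 ^ i)"

lemma balanced_colless_add_eq:
  assumes "a \<le> b" "b \<le> 2 * a" "power_of_two a \<or> power_of_two b"
  shows "balanced_colless (a + b)
           = balanced_colless a + balanced_colless b + nat \<bar>int a - int b\<bar>"
proof -
  have "colless_defect a b = 0"
    using assms colless_defect_power_of_2 colless_defect_commute[of a b]
    unfolding power_of_two_def by auto
  then show ?thesis
    by (simp add: colless_defect_def)
qed

lemma power_of_two_le_double:
  assumes "power_of_two a" "power_of_two b" "a \<le> b" "b \<le> 2 * a"
  shows "b = a \<or> b = 2 * a"
proof -
  obtain i j where a: "a = 2 ^ i" and b: "b = 2 ^ j"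
    using assms(1,2) unfolding power_of_two_def by blast
  have "(2::nat) ^ i \<le> 2 ^ j" "(2::nat) ^ j \<le> 2 ^ Suc i"
    using assms(3,4) a b by simp_all
  then have "i \<le> j" "j \<le> Suc i"
    by (simp_all del: power_Suc)
  then have "j = i \<or> j = Suc i" by linarith
  then show ?thesis using a b by auto
qed

definition gfb_invariant :: "nat \<Rightarrow> btree multiset \<Rightarrow> bool" where
  "gfb_invariant n M \<longleftrightarrow>
     (\<Sum>t\<in>#M. leaves t) = n \<and>
     (\<forall>t\<in>#M. colless t = balanced_colless (leaves t)) \<and>
     (\<forall>s\<in>#M. \<forall>t\<in>#M. leaves s \<le> 2 * leaves t) \<and>
     size (filter_mset (\<lambda>t. \<not> power_of_two (leaves t)) M) \<le> 1"

lemma gfb_invariant_replicate_Leaf: "gfb_invariant n (replicate_mset n Leaf)"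
proof -
  have "power_of_two 1"
    unfolding power_of_two_def by (metis power_0)
  then have all_powers:
    "filter_mset (\<lambda>t. \<not> power_of_two (leaves t)) (replicate_mset n Leaf) = {#}"
    by simp
  show ?thesis
    using \<open>power_of_two 1\<close> unfolding gfb_invariant_def all_powers
    by (simp add: sum_mset_replicate_mset)
qed

lemma gfb_invariant_merge:
  assumes inv: "gfb_invariant n (add_mset u (add_mset v R))"
    and uv: "leaves u \<le> leaves v" and v_min: "\<forall>w\<in>#R. leaves v \<le> leaves w"
  shows "gfb_invariant n (add_mset (Node u v) R)"
proof -
  define a b where "a = leaves u" and "b = leaves v"
  let ?np = "\<lambda>t. \<not> power_of_two (leaves t)"
  have ratio: "\<forall>s\<in>#add_mset u (add_mset v R). \<forall>t\<in>#add_mset u (add_mset v R).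
                  leaves s \<le> 2 * leaves t"
    and few: "size (filter_mset ?np (add_mset u (add_mset v R))) \<le> 1"
    using inv unfolding gfb_invariant_def by blast+
  have "b \<le> 2 * a" and R_le: "\<forall>w\<in>#R. leaves w \<le> 2 * a"
    using ratio by (simp_all add: a_def b_def)
  have "filter_mset ?np R \<subseteq># filter_mset ?np (add_mset u (add_mset v R))"
    by (intro multiset_filter_mono) auto
  with few have R_np: "size (filter_mset ?np R) \<le> 1"
    using size_mset_mono order_trans by blast
  have u_or_v: "power_of_two a \<or> power_of_two b"
    using few by (auto simp: a_def b_def split: if_splits)
  have R_pow: "filter_mset ?np R = {#}" if "\<not> (power_of_two a \<and> power_of_two b)"
    using few that by (auto simp: a_def b_def split: if_splits)
  have colless_Node: "colless (Node u v) = balanced_colless (leaves (Node u v))"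
    using inv balanced_colless_add_eq[OF _ \<open>b \<le> 2 * a\<close> u_or_v] uv
    by (simp add: gfb_invariant_def a_def b_def)
  have "filter_mset ?np R = {#}" if "\<not> power_of_two (a + b)"
  proof (cases "power_of_two a \<and> power_of_two b")
    case True
    then have "b = a \<or> b = 2 * a"
      using power_of_two_le_double uv \<open>b \<le> 2 * a\<close> by (simp add: a_def b_def)
    moreover have "b \<noteq> a"
      using True that unfolding power_of_two_def by (metis mult_2 power_Suc)
    ultimately have "\<forall>w\<in>#R. leaves w = b"
      using v_min R_le by (fastforce simp: b_def)
    with True show ?thesis by simp
  qed (use R_pow in blast)
  with inv R_np v_min R_le uv colless_Node show ?thesis
    unfolding gfb_invariant_def by (auto simp: a_def b_def)
qed

lemma gfb_invariant_step:
  assumes "gfb_step M M'" "gfb_invariant n M"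
  shows "gfb_invariant n M'"
  using assms(1)
proof cases
  case (1 u v)
  define R where "R = M - {#u#} - {#v#}"
  have M_minus_u: "M - {#u#} = add_mset v R"
    unfolding R_def using insert_DiffM[of v "M - {#u#}"] 1 by simp
  then have M: "M = add_mset u (add_mset v R)"
    using 1 by (metis insert_DiffM)
  show ?thesis
    unfolding \<open>M' = _\<close> R_def[symmetric]
  proof (rule gfb_invariant_merge)
    show "gfb_invariant n (add_mset u (add_mset v R))"
      using assms(2) M by simp
    show "leaves u \<le> leaves v" "\<forall>w\<in>#R. leaves v \<le> leaves w"
      using 1 M M_minus_u by simp_all
  qed
qed

lemma gfb_invariant_rtranclp:
  "gfb_step\<^sup>*\<^sup>* M M' \<Longrightarrow> gfb_invariant n M \<Longrightarrow> gfb_invariant n M'"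
  by (induction rule: rtranclp_induct) (auto intro: gfb_invariant_step)

theorem proposition6:
  fixes n :: nat and T :: btree
  assumes "n \<ge> 1" and "is_GFB n T"
  shows "colless T = min_colless n"
  \<comment> \<open>The hypothesis \<open>n \<ge> 1\<close> is implied by \<open>is_GFB n T\<close>.\<close>
proof -
  have "gfb_invariant n {#T#}"
    using assms(2) gfb_invariant_replicate_Leaf unfolding is_GFB_def
    by (rule gfb_invariant_rtranclp)
  then have "leaves T = n" "colless T = balanced_colless n"
    unfolding gfb_invariant_def by auto
  then show ?thesis
    by (simp add: min_colless_eqI)
qed

end
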